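(* Let $G=\theta_{d_1,\dots,d_\ell}$ be a generalized theta graph with $\ell\ge1$ paths and $d_i\ge1$ for all $i$. Then Broadcast is solvable on $G$ with $k$ ignorant agents for every $k\ge \ell$ (with $k+1$ not exceeding the number of nodes of $G$).
   Context: Generalized theta graph: $\theta_{d_1,\dots,d_\ell}$ consists of two distinct fixed nodes $N,S$ (the poles) joined by $\ell$ internally vertex-disjoint paths, the $i$-th of which has exactly $d_i\ge 1$ internal nodes. Broadcast model: a connected base graph $G=(V,E)$ with $n$ nodes. There is one source agent holding a message $\mathcal M$ and $k\ge1$ ignorant agents (agents not holding $\mathcal M$); initially all agents occupy pairwise distinct nodes, the initial placement being chosen by the adversary. Time proceeds in synchronous rounds; in each round: (1) the adversary removes a (possibly empty) set $E'\subseteq E$ of edges such that $(V,E\setminus E')$ is connected; (2) each agent (agents have unique IDs, local memory, and see the entire current graph, the positions of all agents and which agents hold $\mathcal M$) chooses either to stay or to traverse an edge of $E\setminus E'$ incident to its current node; (3) agents move. Whenever an ignorant agent is at the same node as an agent holding $\mathcal M$, it receives $\mathcal M$ and becomes a source agent. The adversary is adaptive and knows the agents' strategy. Broadcast is solvable on $G$ with $k$ ignorant agents if the agents have a strategy such that, for every initial placement and every adversary behaviour, after finitely many rounds all agents hold $\mathcal M$; otherwise the adversary is said to have a winning strategy. *)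

theory Defs
  imports Main
begin

definition graph_connected :: "'v set \<Rightarrow> 'v set set \<Rightarrow> bool" where
  "graph_connected V E \<longleftrightarrow>
     (\<forall>u\<in>V. \<forall>v\<in>V. (u, v) \<in> {(x, y). {x, y} \<in> E}\<^sup>*)"

datatype tnode = North | South | Inner nat nat

definition theta_V :: "nat \<Rightarrow> (nat \<Rightarrow> nat) \<Rightarrow> tnode set" where
  "theta_V l d = {North, South} \<union> {Inner i j | i j. i < l \<and> j < d i}"

definition theta_E :: "nat \<Rightarrow> (nat \<Rightarrow> nat) \<Rightarrow> tnode set set" where
  "theta_E l d =
     {{North, Inner i 0} | i. i < l}
   \<union> {{Inner i j, Inner i (Suc j)} | i j. i < l \<and> Suc j < d i}
   \<union> {{Inner i (d i - 1), South} | i. i < l}"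

text \<open>Agents are 0..k (k+1 agents); s is the ID of the source agent.
  A (full-information) strategy sigma maps the initial placement p0, the
  source ID s and the list of edge sets removed by the adversary so far
  (including the current round) to the new positions of all agents. Since all
  agents see everything and the game is deterministic, this history determines
  the whole past play.\<close>

type_synonym 'v strategy = "(nat \<Rightarrow> 'v) \<Rightarrow> nat \<Rightarrow> 'v set set list \<Rightarrow> (nat \<Rightarrow> 'v)"

fun bc_run :: "nat \<Rightarrow> 'v strategy \<Rightarrow> (nat \<Rightarrow> 'v) \<Rightarrow> nat \<Rightarrow> (nat \<Rightarrow> 'v set set)
               \<Rightarrow> nat \<Rightarrow> (nat \<Rightarrow> 'v) \<times> nat set" where
  "bc_run k \<sigma> p0 s R 0 = (p0, {s})"
| "bc_run k \<sigma> p0 s R (Suc t) =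
     (let (p, I) = bc_run k \<sigma> p0 s R t;
          p' = \<sigma> p0 s (map R [0..<Suc t])
      in (p', I \<union> {a. a \<le> k \<and> (\<exists>b\<in>I. b \<le> k \<and> p' a = p' b)}))"

definition broadcast_solvable :: "'v set \<Rightarrow> 'v set set \<Rightarrow> nat \<Rightarrow> bool" where
  "broadcast_solvable V E k \<longleftrightarrow>
     (\<exists>\<sigma> :: 'v strategy.
       \<forall>p0 s R.
         inj_on p0 {..k} \<and> p0 ` {..k} \<subseteq> V \<and> s \<le> k \<and>
         (\<forall>t. R t \<subseteq> E \<and> graph_connected V (E - R t))
         \<longrightarrow>
         (\<forall>t. \<forall>a\<le>k.
             let p = fst (bc_run k \<sigma> p0 s R t);
                 p' = fst (bc_run k \<sigma> p0 s R (Suc t))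
             in p' a = p a \<or> {p a, p' a} \<in> E - R t)
         \<and> (\<exists>t. {..k} \<subseteq> snd (bc_run k \<sigma> p0 s R t)))"

end

theory Submission
  imports Defs
begin

text \<open>
  An edge set removed by the adversary keeps the theta graph connected only if it cuts every
  path at most once and leaves some path intact.

  In the strategy, the least agent at North, the anchor, never moves. The agents whose
  status differs from the anchor's (all agents if North is empty) are movers; they try to
  reach North, where they would meet the anchor. The others are helpers; they sweep the paths
  and try to meet movers. While the informed set does not grow, the anchor's status is
  preserved and a lexicographic potential (whether North is empty, the positions of the movers,
  the positions of the helpers) does not increase and strictly decreases unless no agent moves.
  In a round in which no agent moves, every agent but the anchor is the unique top mover or
  the unique lowest helper on its own path, and that path is cut. All these paths differ from
  an intact one, so there are at most \<open>l - 1\<close> such agents, contradicting \<open>k \<ge> l\<close>.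
\<close>

section \<open>Edges of the theta graph\<close>

text \<open>Edge \<open>i \<le> d q\<close> of path \<open>q\<close> is the one just above node \<open>Inner q i\<close>, or above
  South if \<open>i = d q\<close>.\<close>

definition path_edge :: "(nat \<Rightarrow> nat) \<Rightarrow> nat \<Rightarrow> nat \<Rightarrow> tnode set" where
  "path_edge d q i =
     (if i = 0 then {North, Inner q 0}
      else if i < d q then {Inner q (i - 1), Inner q i}
      else {Inner q (d q - 1), South})"

definition node_above :: "nat \<Rightarrow> nat \<Rightarrow> tnode" where
  "node_above q j = (if j = 0 then North else Inner q (j - 1))"

definition node_below :: "(nat \<Rightarrow> nat) \<Rightarrow> nat \<Rightarrow> nat \<Rightarrow> tnode" where
  "node_below d q j = (if Suc j < d q then Inner q (Suc j) else South)"

lemma Inner_in_theta_V: "Inner q j \<in> theta_V l d \<longleftrightarrow> q < l \<and> j < d q"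
  unfolding theta_V_def by auto

lemma poles_in_theta_V: "North \<in> theta_V l d" "South \<in> theta_V l d"
  unfolding theta_V_def by auto

lemma path_edge_in_theta_E:
  assumes "q < l" "i \<le> d q" "d q \<ge> 1"
  shows "path_edge d q i \<in> theta_E l d"
proof -
  consider "i = 0" | "0 < i" "i < d q" | "i = d q" "i > 0"
    using assms by linarith
  then show ?thesis
  proof cases
    case 2
    then have "path_edge d q i = {Inner q (i - 1), Inner q (Suc (i - 1))}"
      unfolding path_edge_def by simp
    with 2 assms show ?thesis unfolding theta_E_def by force
  qed (use assms in \<open>auto simp: path_edge_def theta_E_def\<close>)
qed

lemma path_edge_above: "j < d q \<Longrightarrow> path_edge d q j = {Inner q j, node_above q j}"
  unfolding path_edge_def node_above_def by (auto simp: insert_commute)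

lemma path_edge_below: "j < d q \<Longrightarrow> path_edge d q (Suc j) = {Inner q j, node_below d q j}"
  unfolding path_edge_def node_below_def by auto

lemma theta_E_at_North:
  assumes "{North, y} \<in> theta_E l d"
  obtains q where "q < l" "y = Inner q 0" "{North, y} = path_edge d q 0"
  using assms unfolding theta_E_def path_edge_def by (auto simp: doubleton_eq_iff)

lemma theta_E_at_Inner:
  assumes "{Inner q j, y} \<in> theta_E l d" "j < d q"
  shows "y = node_above q j \<and> {Inner q j, y} = path_edge d q j
    \<or> y = node_below d q j \<and> {Inner q j, y} = path_edge d q (Suc j)"
  using assms unfolding theta_E_def path_edge_def node_above_def node_below_def
  by (auto simp: doubleton_eq_iff)

lemma graph_connected_closed_set:
  assumes "graph_connected V E" "u \<in> V" "v \<in> V" "u \<in> X"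
    and closed: "\<And>x y. {x, y} \<in> E \<Longrightarrow> x \<in> X \<Longrightarrow> y \<in> X"
  shows "v \<in> X"
proof -
  have "(u, v) \<in> {(x, y). {x, y} \<in> E}\<^sup>*"
    using assms(1-3) unfolding graph_connected_def by blast
  then show ?thesis
    by (induction rule: rtrancl_induct) (use \<open>u \<in> X\<close> closed in auto)
qed

section \<open>Admissible edge removals\<close>

lemma path_cut_at_most_once:
  assumes conn: "graph_connected (theta_V l d) (theta_E l d - r)" and q: "q < l"
    and i: "i < i'" "i' \<le> d q" and cut: "path_edge d q i \<in> r" "path_edge d q i' \<in> r"
  shows False
proof -
  let ?X = "{Inner q j | j. i \<le> j \<and> j < i'}"
  have "North \<in> ?X"
  proof (rule graph_connected_closed_set[OF conn])
    show "Inner q i \<in> theta_V l d" using q i by (simp add: Inner_in_theta_V)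
  next
    fix x y assume e: "{x, y} \<in> theta_E l d - r" and "x \<in> ?X"
    then obtain j where x: "x = Inner q j" "i \<le> j" "j < i'" by blast
    from theta_E_at_Inner[of q j y] e x i consider
      "y = node_above q j" "path_edge d q j \<notin> r"
      | "y = node_below d q j" "path_edge d q (Suc j) \<notin> r"
      by fastforce
    then show "y \<in> ?X"
    proof cases
      case 1
      with cut x have "i < j" by (metis le_neq_implies_less)
      with 1 x show ?thesis by (auto simp: node_above_def)
    next
      case 2
      with cut x have "Suc j < i'" by (metis Suc_lessI)
      with 2 x i show ?thesis by (auto simp: node_below_def)
    qed
  qed (use i in \<open>auto simp: poles_in_theta_V\<close>)
  then show False by auto
qed

lemma path_cut_unique:
  assumes "graph_connected (theta_V l d) (theta_E l d - r)" "q < l" "i \<le> d q" "i' \<le> d q"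
    and "path_edge d q i \<in> r" "path_edge d q i' \<in> r"
  shows "i = i'"
  using path_cut_at_most_once[of l d r q] assms by (metis linorder_neqE_nat)

lemma intact_path_exists:
  assumes conn: "graph_connected (theta_V l d) (theta_E l d - r)"
  obtains P where "P < l" "\<And>i. i \<le> d P \<Longrightarrow> path_edge d P i \<notin> r"
proof -
  have "\<exists>P<l. \<forall>i\<le>d P. path_edge d P i \<notin> r"
  proof (rule ccontr)
    assume "\<not> ?thesis"
    then have cut: "\<exists>i\<le>d q. path_edge d q i \<in> r" if "q < l" for q
      using that by auto
    define c where "c q = (LEAST i. path_edge d q i \<in> r)" for q
    have c_cut: "path_edge d q (c q) \<in> r" and c_le: "c q \<le> d q" if "q < l" for q
      using cut[OF that] unfolding c_def by (metis LeastI Least_le le_trans)+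
    have below_c: "path_edge d q i \<notin> r" if "i < c q" for q i
      using that unfolding c_def by (rule not_less_Least)
    let ?X = "{North} \<union> {Inner q j | q j. q < l \<and> j < c q}"
    have "South \<in> ?X"
    proof (rule graph_connected_closed_set[OF conn])
      fix x y assume e: "{x, y} \<in> theta_E l d - r" and "x \<in> ?X"
      then consider "x = North" | q j where "x = Inner q j" "q < l" "j < c q"
        by blast
      then show "y \<in> ?X"
      proof cases
        case 1
        with e obtain q where "q < l" "y = Inner q 0" "path_edge d q 0 \<notin> r"
          by (auto elim: theta_E_at_North)
        with c_cut show ?thesis by (metis (mono_tags, lifting) UnI2 gr0I mem_Collect_eq)
      next
        case (2 q j)
        with c_le have "j < d q" by (meson order_less_le_trans)
        with theta_E_at_Inner[of q j y] e 2 consider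
          "y = node_above q j" | "y = node_below d q j" "path_edge d q (Suc j) \<notin> r"
          by fastforce
        then show ?thesis
        proof cases
          case 1
          with 2 show ?thesis by (auto simp: node_above_def)
        next
          case b: 2
          with c_cut \<open>q < l\<close> \<open>j < c q\<close> have "Suc j < c q" by (metis Suc_lessI)
          with b \<open>q < l\<close> c_le[OF \<open>q < l\<close>] show ?thesis by (auto simp: node_below_def)
        qed
      qed
    qed (auto simp: poles_in_theta_V)
    then show False by auto
  qed
  then show ?thesis using that by blast
qed

section \<open>Positional strategies\<close>

text \<open>A positional strategy moves the agents according to the current state alone (placement,
  informed set and the edges removed in the current round); it recovers that state by replaying
  the history it is given.\<close>

definition positional_round ::
  "nat \<Rightarrow> (nat set \<Rightarrow> (nat \<Rightarrow> 'v) \<Rightarrow> 'v set set \<Rightarrow> nat \<Rightarrow> 'v)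
    \<Rightarrow> (nat \<Rightarrow> 'v) \<times> nat set \<Rightarrow> 'v set set \<Rightarrow> (nat \<Rightarrow> 'v) \<times> nat set" where
  "positional_round k f st r =
     (let p' = f (snd st) (fst st) r
      in (p', snd st \<union> {a. a \<le> k \<and> (\<exists>b\<in>snd st. b \<le> k \<and> p' a = p' b)}))"

definition positional_strategy ::
  "nat \<Rightarrow> (nat set \<Rightarrow> (nat \<Rightarrow> 'v) \<Rightarrow> 'v set set \<Rightarrow> nat \<Rightarrow> 'v) \<Rightarrow> 'v strategy" where
  "positional_strategy k f p0 s Rs =
     (if Rs = [] then p0
      else let st = foldl (positional_round k f) (p0, {s}) (butlast Rs)
           in f (snd st) (fst st) (last Rs))"

lemma bc_run_positional_strategy:
  "bc_run k (positional_strategy k f) p0 s R (Suc t)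
    = positional_round k f (bc_run k (positional_strategy k f) p0 s R t) (R t)"
proof -
  let ?run = "bc_run k (positional_strategy k f) p0 s R"
  have replay: "?run t = foldl (positional_round k f) (p0, {s}) (map R [0..<t])" for t
  proof (induction t)
    case (Suc t)
    obtain p I where run: "?run t = (p, I)"
      by (cases "?run t")
    with Suc have replayed: "foldl (positional_round k f) (p0, {s}) (map R [0..<t]) = (p, I)"
      by simp
    then have "positional_strategy k f p0 s (map R [0..<Suc t]) = f I p (R t)"
      unfolding positional_strategy_def by (simp add: Let_def)
    with run have "?run (Suc t) = positional_round k f (p, I) (R t)"
      by (simp add: positional_round_def)
    with replayed show ?case
      by simp
  qed simp
  show ?thesis
    unfolding replay by simp
qed

section \<open>The strategy\<close>

text \<open>A state is a placement \<open>p\<close> of the agents \<open>0..k\<close> together with the set \<open>I\<close> of informed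
  agents; an edge set \<open>r\<close> is the set removed in the current round.\<close>

locale theta_broadcast =
  fixes l k :: nat and d :: "nat \<Rightarrow> nat"
  assumes paths_nonempty: "\<forall>i<l. d i \<ge> 1" and enough_agents: "l \<le> k"
begin

definition north_agents :: "(nat \<Rightarrow> tnode) \<Rightarrow> nat set" where
  "north_agents p = {b. b \<le> k \<and> p b = North}"

definition anchor :: "(nat \<Rightarrow> tnode) \<Rightarrow> nat" where
  "anchor p = Min (north_agents p)"

definition movers :: "nat set \<Rightarrow> (nat \<Rightarrow> tnode) \<Rightarrow> nat set" where
  "movers I p =
     (if north_agents p = {} then {..k} else {b. b \<le> k \<and> (b \<in> I \<longleftrightarrow> anchor p \<notin> I)})"

definition mover_path :: "nat set \<Rightarrow> (nat \<Rightarrow> tnode) \<Rightarrow> nat \<Rightarrow> bool" where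
  "mover_path I p q \<longleftrightarrow> (\<exists>b\<in>movers I p. \<exists>j. p b = Inner q j)"

definition top_mover :: "nat set \<Rightarrow> (nat \<Rightarrow> tnode) \<Rightarrow> nat \<Rightarrow> nat \<Rightarrow> nat \<Rightarrow> bool" where
  "top_mover I p q j a \<longleftrightarrow>
     (\<forall>b\<in>movers I p. \<forall>j'. p b = Inner q j' \<longrightarrow> j < j' \<or> (j = j' \<and> a \<le> b))"

definition lowest_helper :: "nat set \<Rightarrow> (nat \<Rightarrow> tnode) \<Rightarrow> nat \<Rightarrow> nat \<Rightarrow> nat \<Rightarrow> bool" where
  "lowest_helper I p q j a \<longleftrightarrow>
     (\<forall>b\<le>k. b \<notin> movers I p \<longrightarrow> (\<forall>j'. p b = Inner q j' \<longrightarrow> j' < j \<or> (j' = j \<and> a \<le> b)))"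

definition south_end :: "nat \<Rightarrow> tnode" where
  "south_end q = Inner q (d q - 1)"

definition south_mover :: "nat set \<Rightarrow> (nat \<Rightarrow> tnode) \<Rightarrow> nat" where
  "south_mover I p = Min {b \<in> movers I p. p b = South}"

definition north_helper :: "nat set \<Rightarrow> (nat \<Rightarrow> tnode) \<Rightarrow> nat" where
  "north_helper I p = Min {b. b \<le> k \<and> b \<notin> movers I p \<and> p b = North \<and> b \<noteq> anchor p}"

definition free_paths :: "nat set \<Rightarrow> (nat \<Rightarrow> tnode) \<Rightarrow> tnode set set \<Rightarrow> nat set" where
  "free_paths I p r = {q. q < l \<and> \<not> mover_path I p q \<and> path_edge d q (d q) \<notin> r}"

definition empty_paths :: "nat set \<Rightarrow> (nat \<Rightarrow> tnode) \<Rightarrow> tnode set set \<Rightarrow> nat set" where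
  "empty_paths I p r = {q. q < l \<and> (\<forall>b\<le>k. \<forall>j. p b \<noteq> Inner q j) \<and> path_edge d q 0 \<notin> r}"

definition open_mover_paths :: "nat set \<Rightarrow> (nat \<Rightarrow> tnode) \<Rightarrow> tnode set set \<Rightarrow> nat set" where
  "open_mover_paths I p r = {q. q < l \<and> mover_path I p q \<and> path_edge d q (d q) \<notin> r}"

text \<open>Helpers circulate: from North down an empty path to South, and from South up a path
  carrying movers.\<close>

definition move :: "nat set \<Rightarrow> (nat \<Rightarrow> tnode) \<Rightarrow> tnode set set \<Rightarrow> nat \<Rightarrow> tnode" where
  "move I p r a =
    (if a \<in> movers I p then
      (case p a of
        North \<Rightarrow> North
      | South \<Rightarrow>
          if a = south_mover I p \<and> free_paths I p r \<noteq> {}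
          then south_end (Min (free_paths I p r)) else South
      | Inner q j \<Rightarrow>
          if top_mover I p q j a
          then (if path_edge d q j \<notin> r then node_above q j else Inner q j)
          else (if path_edge d q (Suc j) \<notin> r then node_below d q j else Inner q j))
     else
      (case p a of
        North \<Rightarrow>
          if a \<noteq> anchor p \<and> a = north_helper I p \<and> empty_paths I p r \<noteq> {}
          then Inner (Min (empty_paths I p r)) 0 else North
      | South \<Rightarrow>
          if open_mover_paths I p r \<noteq> {}
          then south_end (Min (open_mover_paths I p r)) else South
      | Inner q j \<Rightarrow>
          if mover_path I p q \<or> \<not> lowest_helper I p q j a
          then (if path_edge d q j \<notin> r then node_above q j else Inner q j)
          else (if path_edge d q (Suc j) \<notin> r then node_below d q j else Inner q j)))"

abbreviation play_round :: "(nat \<Rightarrow> tnode) \<times> nat set \<Rightarrow> tnode set set \<Rightarrow> (nat \<Rightarrow> tnode) \<times> nat set"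
  where "play_round \<equiv> positional_round k move"

definition valid_state :: "(nat \<Rightarrow> tnode) \<times> nat set \<Rightarrow> bool" where
  "valid_state st \<longleftrightarrow> (\<forall>a\<le>k. fst st a \<in> theta_V l d) \<and> snd st \<subseteq> {..k} \<and> snd st \<noteq> {}
     \<and> (\<forall>a\<le>k. \<forall>b\<le>k. fst st a = fst st b \<longrightarrow> (a \<in> snd st \<longleftrightarrow> b \<in> snd st))"

definition admissible :: "tnode set set \<Rightarrow> bool" where
  "admissible r \<longleftrightarrow> graph_connected (theta_V l d) (theta_E l d - r)"

lemma anchor_in_north_agents: "north_agents p \<noteq> {} \<Longrightarrow> anchor p \<in> north_agents p"
  unfolding anchor_def by (rule Min_in) (auto simp: north_agents_def)

lemma path_length_pos: "q < l \<Longrightarrow> 0 < d q"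
  using paths_nonempty by fastforce

lemma node_above_eq_Inner: "node_above q j = Inner q' j' \<Longrightarrow> q' = q \<and> j = Suc j'"
  unfolding node_above_def by (auto split: if_splits)

lemma node_below_eq_Inner: "node_below d q j = Inner q' j' \<Longrightarrow> q' = q \<and> j' = Suc j"
  unfolding node_below_def by (auto split: if_splits)

lemma node_above_neq: "node_above q j \<noteq> Inner q j"
  unfolding node_above_def by auto

lemma node_below_neq: "node_below d q j \<noteq> Inner q j"
  unfolding node_below_def by auto

lemma Min_free_paths: "free_paths I p r \<noteq> {} \<Longrightarrow> Min (free_paths I p r) \<in> free_paths I p r"
  by (rule Min_in) (auto simp: free_paths_def)

lemma Min_empty_paths: "empty_paths I p r \<noteq> {} \<Longrightarrow> Min (empty_paths I p r) \<in> empty_paths I p r"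
  by (rule Min_in) (auto simp: empty_paths_def)

lemma Min_open_mover_paths:
  "open_mover_paths I p r \<noteq> {} \<Longrightarrow> Min (open_mover_paths I p r) \<in> open_mover_paths I p r"
  by (rule Min_in) (auto simp: open_mover_paths_def)

lemma move_up_legal:
  assumes "q < l" "j < d q" "path_edge d q j \<notin> r"
  shows "{Inner q j, node_above q j} \<in> theta_E l d - r \<and> node_above q j \<in> theta_V l d"
  using assms path_edge_above[of j d q] path_edge_in_theta_E[of q l j d] path_length_pos[of q]
  by (auto simp: node_above_def Inner_in_theta_V poles_in_theta_V)

lemma move_down_legal:
  assumes "q < l" "j < d q" "path_edge d q (Suc j) \<notin> r"
  shows "{Inner q j, node_below d q j} \<in> theta_E l d - r \<and> node_below d q j \<in> theta_V l d"
  using assms path_edge_below[of j d q] path_edge_in_theta_E[of q l "Suc j" d]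
  by (auto simp: node_below_def Inner_in_theta_V poles_in_theta_V)

lemma enter_from_South_legal:
  assumes "q < l" "path_edge d q (d q) \<notin> r"
  shows "{South, south_end q} \<in> theta_E l d - r \<and> south_end q \<in> theta_V l d"
proof -
  have "path_edge d q (d q) = {South, south_end q}"
    using path_length_pos[OF assms(1)] by (auto simp: path_edge_def south_end_def)
  then show ?thesis
    using assms path_edge_in_theta_E[of q l "d q" d] path_length_pos[of q]
    by (auto simp: south_end_def Inner_in_theta_V)
qed

lemma enter_from_North_legal:
  assumes "q < l" "path_edge d q 0 \<notin> r"
  shows "{North, Inner q 0} \<in> theta_E l d - r \<and> Inner q 0 \<in> theta_V l d"
  using assms path_edge_in_theta_E[of q l 0 d] path_length_pos[of q]
  by (auto simp: path_edge_def Inner_in_theta_V)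

lemma move_mover_North: "a \<in> movers I p \<Longrightarrow> p a = North \<Longrightarrow> move I p r a = North"
  unfolding move_def by simp

lemma move_mover_South: "a \<in> movers I p \<Longrightarrow> p a = South \<Longrightarrow>
    move I p r a = (if a = south_mover I p \<and> free_paths I p r \<noteq> {}
                    then south_end (Min (free_paths I p r)) else South)"
  unfolding move_def by simp

lemma move_mover_Inner: "a \<in> movers I p \<Longrightarrow> p a = Inner q j \<Longrightarrow>
    move I p r a =
      (if top_mover I p q j a
       then (if path_edge d q j \<notin> r then node_above q j else Inner q j)
       else (if path_edge d q (Suc j) \<notin> r then node_below d q j else Inner q j))"
  unfolding move_def by simp

lemma move_helper_North: "a \<notin> movers I p \<Longrightarrow> p a = North \<Longrightarrow>
    move I p r a = (if a \<noteq> anchor p \<and> a = north_helper I p \<and> empty_paths I p r \<noteq> {}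
                    then Inner (Min (empty_paths I p r)) 0 else North)"
  unfolding move_def by simp

lemma move_helper_South: "a \<notin> movers I p \<Longrightarrow> p a = South \<Longrightarrow>
    move I p r a = (if open_mover_paths I p r \<noteq> {}
                    then south_end (Min (open_mover_paths I p r)) else South)"
  unfolding move_def by simp

lemma move_helper_Inner: "a \<notin> movers I p \<Longrightarrow> p a = Inner q j \<Longrightarrow>
    move I p r a =
      (if mover_path I p q \<or> \<not> lowest_helper I p q j a
       then (if path_edge d q j \<notin> r then node_above q j else Inner q j)
       else (if path_edge d q (Suc j) \<notin> r then node_below d q j else Inner q j))"
  unfolding move_def by simp

lemma move_Inner_cases:
  assumes "p a = Inner q j"
  shows "move I p r a = Inner q j
    \<or> move I p r a = node_above q j \<and> path_edge d q j \<notin> r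
    \<or> move I p r a = node_below d q j \<and> path_edge d q (Suc j) \<notin> r"
  using assms by (auto simp: move_def)

lemma move_legal:
  assumes "p a \<in> theta_V l d"
  shows "move I p r a = p a
    \<or> {p a, move I p r a} \<in> theta_E l d - r \<and> move I p r a \<in> theta_V l d"
proof (cases "p a")
  case North
  then show ?thesis
    using enter_from_North_legal[of "Min (empty_paths I p r)" r] Min_empty_paths[of I p r]
    by (auto simp: move_def empty_paths_def)
next
  case South
  then show ?thesis
    using enter_from_South_legal[of "Min (free_paths I p r)" r] Min_free_paths[of I p r]
      enter_from_South_legal[of "Min (open_mover_paths I p r)" r] Min_open_mover_paths[of I p r]
    by (auto simp: move_def free_paths_def open_mover_paths_def)
next
  case (Inner q j)
  with assms have "q < l" "j < d q" by (auto simp: Inner_in_theta_V)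
  with Inner show ?thesis
    using move_Inner_cases[of p a q j I r, OF Inner] move_up_legal move_down_legal by auto
qed

lemma valid_state_play_round:
  assumes "valid_state (p, I)"
  shows "valid_state (play_round (p, I) r)"
proof -
  define p' where "p' = move I p r"
  define I' where "I' = I \<union> {a. a \<le> k \<and> (\<exists>b\<in>I. b \<le> k \<and> p' a = p' b)}"
  have I_le: "I \<subseteq> {..k}" and "I \<noteq> {}"
    using assms by (auto simp: valid_state_def)
  have round: "play_round (p, I) r = (p', I')"
    unfolding positional_round_def p'_def I'_def Let_def by simp
  have V: "p' a \<in> theta_V l d" if "a \<le> k" for a
  proof -
    have "p a \<in> theta_V l d"
      using assms that by (simp add: valid_state_def)
    then show ?thesis
      using move_legal[of p a I r] unfolding p'_def by auto
  qed
  have closed: "b \<in> I'" if "a \<in> I'" "b \<le> k" "p' a = p' b" for a b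
  proof -
    obtain c where "c \<in> I" "p' a = p' c"
      using \<open>a \<in> I'\<close> I_le unfolding I'_def by blast
    with that I_le show ?thesis
      unfolding I'_def by auto
  qed
  then have "a \<in> I' \<longleftrightarrow> b \<in> I'" if "a \<le> k" "b \<le> k" "p' a = p' b" for a b
    using that by metis
  moreover have "I' \<subseteq> {..k}" "I' \<noteq> {}"
    using I_le \<open>I \<noteq> {}\<close> unfolding I'_def by auto
  ultimately show ?thesis
    using V unfolding round valid_state_def fst_conv snd_conv by blast
qed

definition total_length :: nat where
  "total_length = (\<Sum>q<l. d q)"

lemma path_length_le_total: "q < l \<Longrightarrow> d q \<le> total_length"
  unfolding total_length_def by (rule member_le_sum) auto

text \<open>The potentials follow the routes of the agents: a mover's potential decreases towards
  North along its path if it is the top mover, and via South otherwise. A helper's route North,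
  down an empty path, South, up below a mover is ranked decreasingly; climbing elsewhere ranks
  above North, the helper's destination then.\<close>

definition mover_pot :: "nat set \<Rightarrow> (nat \<Rightarrow> tnode) \<Rightarrow> nat \<Rightarrow> nat" where
  "mover_pot I p a =
     (case p a of
       North \<Rightarrow> 0
     | South \<Rightarrow> total_length + 1
     | Inner q j \<Rightarrow>
         if top_mover I p q j a then j + 1 else total_length + 1 + (d q - j))"

definition helper_pot :: "nat set \<Rightarrow> (nat \<Rightarrow> tnode) \<Rightarrow> nat \<Rightarrow> nat" where
  "helper_pot I p a =
     (case p a of
       North \<Rightarrow> 2 * total_length + 2
     | South \<Rightarrow> total_length + 1
     | Inner q j \<Rightarrow>
         if mover_path I p q then
           (if \<exists>b\<in>movers I p. \<exists>j'. p b = Inner q j' \<and> j' < j then j + 1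
            else 2 * total_length + 3 + j)
         else if lowest_helper I p q j a then total_length + 1 + (d q - j)
         else 2 * total_length + 3 + j)"

definition progress :: "(nat \<Rightarrow> tnode) \<times> nat set \<Rightarrow> nat \<times> nat \<times> nat \<times> nat" where
  "progress st =
     (card ({..k} - snd st),
      if north_agents (fst st) = {} then 1 else 0,
      \<Sum>a\<in>movers (snd st) (fst st). mover_pot (snd st) (fst st) a,
      \<Sum>a\<in>{..k} - movers (snd st) (fst st). helper_pot (snd st) (fst st) a)"

abbreviation progress_order :: "((nat \<times> nat \<times> nat \<times> nat) \<times> (nat \<times> nat \<times> nat \<times> nat)) set" where
  "progress_order \<equiv> less_than <*lex*> less_than <*lex*> less_than <*lex*> less_than"

end

section \<open>One round\<close>

fun path_of :: "tnode \<Rightarrow> nat" where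
  "path_of (Inner q j) = q" | "path_of North = 0" | "path_of South = 0"

lemma card_less_one_per_path:
  assumes on_paths: "\<And>a. a \<in> A \<Longrightarrow> \<exists>q j. pos a = Inner q j \<and> q < l \<and> q \<noteq> P"
    and one_per_path: "\<And>a b q ja jb.
      a \<in> A \<Longrightarrow> b \<in> A \<Longrightarrow> pos a = Inner q ja \<Longrightarrow> pos b = Inner q jb \<Longrightarrow> a = b"
    and "P < l"
  shows "card A < l"
proof -
  have "inj_on (path_of \<circ> pos) A"
  proof (rule inj_onI)
    fix a b assume "a \<in> A" "b \<in> A" "(path_of \<circ> pos) a = (path_of \<circ> pos) b"
    with on_paths[of a] on_paths[of b] one_per_path show "a = b" by force
  qed
  moreover have "(path_of \<circ> pos) ` A \<subseteq> {..<l} - {P}"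
    using on_paths by force
  ultimately have "card A \<le> card ({..<l} - {P})"
    by (rule card_inj_on_le) auto
  with \<open>P < l\<close> show ?thesis by simp
qed

locale theta_round = theta_broadcast +
  fixes p :: "nat \<Rightarrow> tnode" and I :: "nat set" and r :: "tnode set set"
  assumes valid: "valid_state (p, I)" and admissible_r: "admissible r"
    and not_all_informed: "\<not> {..k} \<subseteq> I"
begin

abbreviation "M \<equiv> movers I p"
abbreviation "p' \<equiv> move I p r"

abbreviation pot_progress :: "(nat set \<Rightarrow> (nat \<Rightarrow> tnode) \<Rightarrow> nat \<Rightarrow> nat) \<Rightarrow> nat \<Rightarrow> bool" where
  "pot_progress pot a \<equiv> pot I p' a \<le> pot I p a \<and> (p' a \<noteq> p a \<longrightarrow> pot I p' a < pot I p a)"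

lemma pos_in_theta_V: "a \<le> k \<Longrightarrow> p a \<in> theta_V l d"
  using valid unfolding valid_state_def fst_conv snd_conv by blast

lemma informed_le_k: "I \<subseteq> {..k}"
  using valid unfolding valid_state_def fst_conv snd_conv by blast

lemma informed_nonempty: "I \<noteq> {}"
  using valid unfolding valid_state_def fst_conv snd_conv by blast

lemma same_node_same_status: "a \<le> k \<Longrightarrow> b \<le> k \<Longrightarrow> p a = p b \<Longrightarrow> a \<in> I \<longleftrightarrow> b \<in> I"
  using valid unfolding valid_state_def fst_conv snd_conv by blast

lemma pos_Inner_bounds: "a \<le> k \<Longrightarrow> p a = Inner q j \<Longrightarrow> q < l \<and> j < d q"
  using pos_in_theta_V[of a] by (auto simp: Inner_in_theta_V)

lemma removed_edge_unique:
  "q < l \<Longrightarrow> i \<le> d q \<Longrightarrow> i' \<le> d q \<Longrightarrow> path_edge d q i \<in> r \<Longrightarrow> path_edge d q i' \<in> r \<Longrightarrow> i = i'"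
  using path_cut_unique[of l d r q i i'] admissible_r unfolding admissible_def by auto

lemma intact_path: obtains P where "P < l" "\<And>i. i \<le> d P \<Longrightarrow> path_edge d P i \<notin> r"
  using intact_path_exists[of l d r] admissible_r unfolding admissible_def by blast

lemma movers_le_k: "M \<subseteq> {..k}"
  unfolding movers_def by auto

lemma anchor_at_North: "north_agents p \<noteq> {} \<Longrightarrow> anchor p \<le> k \<and> p (anchor p) = North"
  using anchor_in_north_agents[of p] unfolding north_agents_def by blast

lemma anchor_not_mover: "north_agents p \<noteq> {} \<Longrightarrow> anchor p \<notin> M"
  unfolding movers_def by auto

lemma mover_status:
  "north_agents p \<noteq> {} \<Longrightarrow> a \<in> M \<Longrightarrow> b \<le> k \<Longrightarrow> b \<notin> M \<Longrightarrow> a \<in> I \<longleftrightarrow> b \<notin> I"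
  unfolding movers_def by auto

lemma top_mover_moves: "a \<in> M \<Longrightarrow> p a = Inner q j \<Longrightarrow> top_mover I p q j a \<Longrightarrow>
    p' a = Inner q j \<and> path_edge d q j \<in> r \<or> p' a = node_above q j \<and> path_edge d q j \<notin> r"
  using move_mover_Inner[of a I p q j r] by auto

lemma other_mover_moves: "a \<in> M \<Longrightarrow> p a = Inner q j \<Longrightarrow> \<not> top_mover I p q j a \<Longrightarrow>
    p' a = Inner q j \<and> path_edge d q (Suc j) \<in> r
    \<or> p' a = node_below d q j \<and> path_edge d q (Suc j) \<notin> r"
  using move_mover_Inner[of a I p q j r] by auto

lemma helper_up_moves:
  "a \<notin> M \<Longrightarrow> p a = Inner q j \<Longrightarrow> mover_path I p q \<or> \<not> lowest_helper I p q j a \<Longrightarrow>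
    p' a = Inner q j \<and> path_edge d q j \<in> r \<or> p' a = node_above q j \<and> path_edge d q j \<notin> r"
  using move_helper_Inner[of a I p q j r] by auto

lemma lowest_helper_moves:
  "a \<notin> M \<Longrightarrow> p a = Inner q j \<Longrightarrow> \<not> mover_path I p q \<Longrightarrow> lowest_helper I p q j a \<Longrightarrow>
    p' a = Inner q j \<and> path_edge d q (Suc j) \<in> r
    \<or> p' a = node_below d q j \<and> path_edge d q (Suc j) \<notin> r"
  using move_helper_Inner[of a I p q j r] by auto

lemma move_Inner_origin:
  assumes "p' b = Inner q j"
  shows "(\<exists>jb. p b = Inner q jb)
    \<or> p b = South \<and> b \<in> M \<and> q \<in> free_paths I p r \<and> b = south_mover I p
    \<or> p b = South \<and> b \<notin> M \<and> q \<in> open_mover_paths I p r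
    \<or> p b = North \<and> b \<notin> M \<and> q \<in> empty_paths I p r \<and> b = north_helper I p \<and> b \<noteq> anchor p
      \<and> j = 0"
proof (cases "p b")
  case North
  with assms Min_empty_paths[of I p r] show ?thesis
    by (auto simp: move_def split: if_splits)
next
  case South
  with assms Min_free_paths[of I p r] Min_open_mover_paths[of I p r] show ?thesis
    by (auto simp: move_def south_end_def split: if_splits)
next
  case (Inner q0 j0)
  with assms move_Inner_cases[of p b q0 j0 I r] have "q0 = q"
    using node_above_eq_Inner node_below_eq_Inner by fastforce
  with Inner show ?thesis by simp
qed

lemma top_mover_le:
  "top_mover I p q ja a \<Longrightarrow> b \<in> M \<Longrightarrow> p b = Inner q jb \<Longrightarrow> ja < jb \<or> ja = jb \<and> a \<le> b"
  unfolding top_mover_def by blast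

lemma top_mover_unique:
  "a \<in> M \<Longrightarrow> b \<in> M \<Longrightarrow> p a = Inner q ja \<Longrightarrow> p b = Inner q jb \<Longrightarrow>
    top_mover I p q ja a \<Longrightarrow> top_mover I p q jb b \<Longrightarrow> a = b"
  using top_mover_le[of q ja a b jb] top_mover_le[of q jb b a ja] by auto

lemma top_mover_exists:
  assumes "b0 \<in> M" "p b0 = Inner q j0"
  shows "\<exists>b\<in>M. \<exists>jb. p b = Inner q jb \<and> top_mover I p q jb b"
proof -
  define jm where "jm = (LEAST j. \<exists>b\<in>M. p b = Inner q j)"
  have "\<exists>j. \<exists>b\<in>M. p b = Inner q j"
    using assms by blast
  then have "\<exists>b\<in>M. p b = Inner q jm"
    unfolding jm_def by (rule LeastI_ex)
  define bm where "bm = (LEAST b. b \<in> M \<and> p b = Inner q jm)"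
  have bm: "bm \<in> M \<and> p bm = Inner q jm"
    unfolding bm_def using \<open>\<exists>b\<in>M. p b = Inner q jm\<close> by (metis (mono_tags, lifting) LeastI)
  have "top_mover I p q jm bm"
    unfolding top_mover_def
  proof (intro ballI allI impI)
    fix b j' assume b: "b \<in> M" "p b = Inner q j'"
    then have "jm \<le> j'"
      unfolding jm_def by (metis (mono_tags, lifting) Least_le)
    moreover have "j' = jm \<Longrightarrow> bm \<le> b"
      unfolding bm_def using b by (metis (mono_tags, lifting) Least_le)
    ultimately show "jm < j' \<or> jm = j' \<and> bm \<le> b" by auto
  qed
  with bm show ?thesis by blast
qed

lemma lowest_helper_ge:
  "lowest_helper I p q ja a \<Longrightarrow> b \<le> k \<Longrightarrow> b \<notin> M \<Longrightarrow> p b = Inner q jb \<Longrightarrow>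
    jb < ja \<or> jb = ja \<and> a \<le> b"
  unfolding lowest_helper_def by blast

lemma lowest_helper_unique:
  "a \<le> k \<Longrightarrow> a \<notin> M \<Longrightarrow> b \<le> k \<Longrightarrow> b \<notin> M \<Longrightarrow> p a = Inner q ja \<Longrightarrow> p b = Inner q jb \<Longrightarrow>
    lowest_helper I p q ja a \<Longrightarrow> lowest_helper I p q jb b \<Longrightarrow> a = b"
  using lowest_helper_ge[of q ja a b jb] lowest_helper_ge[of q jb b a ja] by auto

lemma lowest_helper_exists:
  assumes "b0 \<le> k" "b0 \<notin> M" "p b0 = Inner q j0"
  shows "\<exists>b\<le>k. b \<notin> M \<and> (\<exists>jb. p b = Inner q jb \<and> lowest_helper I p q jb b)"
proof -
  let ?S = "{j. \<exists>b\<le>k. b \<notin> M \<and> p b = Inner q j}"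
  have fin: "finite ?S"
  proof (rule finite_subset[of _ "{..<d q}"])
    show "?S \<subseteq> {..<d q}" using pos_Inner_bounds by auto
  qed simp
  have "j0 \<in> ?S" using assms by blast
  define jm where "jm = Max ?S"
  have "jm \<in> ?S"
    unfolding jm_def using fin \<open>j0 \<in> ?S\<close> by (metis (no_types, lifting) Max_in empty_iff)
  then have ex: "\<exists>b. b \<le> k \<and> b \<notin> M \<and> p b = Inner q jm" by blast
  define bm where "bm = (LEAST b. b \<le> k \<and> b \<notin> M \<and> p b = Inner q jm)"
  have bm: "bm \<le> k \<and> bm \<notin> M \<and> p bm = Inner q jm"
    unfolding bm_def using ex by (metis (mono_tags, lifting) LeastI)
  have "lowest_helper I p q jm bm"
    unfolding lowest_helper_def
  proof (intro allI impI)
    fix b j' assume b: "b \<le> k" "b \<notin> M" "p b = Inner q j'"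
    then have "j' \<in> ?S" by blast
    then have "j' \<le> jm"
      unfolding jm_def using fin by simp
    moreover have "j' = jm \<Longrightarrow> bm \<le> b"
      unfolding bm_def using b by (metis (mono_tags, lifting) Least_le)
    ultimately show "j' < jm \<or> j' = jm \<and> bm \<le> b" by auto
  qed
  with bm show ?thesis by blast
qed

lemma mover_pathI: "b \<in> M \<Longrightarrow> p b = Inner q j \<Longrightarrow> mover_path I p q"
  unfolding mover_path_def by blast

lemma free_path_lt: "q \<in> free_paths I p r \<Longrightarrow> q < l"
  unfolding free_paths_def by blast

lemma free_path_no_mover: "q \<in> free_paths I p r \<Longrightarrow> \<not> mover_path I p q"
  unfolding free_paths_def by blast

lemma open_mover_pathD: "q \<in> open_mover_paths I p r \<Longrightarrow> mover_path I p q \<and> q < l"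
  unfolding open_mover_paths_def by blast

lemma empty_path_lt: "q \<in> empty_paths I p r \<Longrightarrow> q < l"
  unfolding empty_paths_def by blast

lemma empty_path_no_agent: "q \<in> empty_paths I p r \<Longrightarrow> b \<le> k \<Longrightarrow> p b \<noteq> Inner q j"
  unfolding empty_paths_def by blast

lemma mover_pot_North: "p0 a = North \<Longrightarrow> mover_pot I0 p0 a = 0"
  unfolding mover_pot_def by simp

lemma mover_pot_South: "p0 a = South \<Longrightarrow> mover_pot I0 p0 a = total_length + 1"
  unfolding mover_pot_def by simp

lemma mover_pot_Inner: "p0 a = Inner q j \<Longrightarrow>
    mover_pot I0 p0 a = (if top_mover I0 p0 q j a then j + 1 else total_length + 1 + (d q - j))"
  unfolding mover_pot_def by simp

text \<open>The assumptions of the following context hold in every round that informs nobody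
  (see \<open>progress_decreases_North_empty\<close> and \<open>progress_decreases_North_occupied\<close>).\<close>

context
  assumes movers_kept: "movers I p' = M"
    and no_mover_reaches_North: "\<forall>a\<in>M. p a \<noteq> North \<longrightarrow> p' a \<noteq> North"
begin

lemma top_mover_after:
  assumes a: "a \<in> M" "p a = Inner q j" "top_mover I p q j a" "p' a = Inner q j'" "j' \<le> j"
  shows "top_mover I p' q j' a"
  unfolding top_mover_def movers_kept
proof (intro ballI allI impI)
  fix b jb' assume b: "b \<in> M" "p' b = Inner q jb'"
  have "mover_path I p q" using mover_pathI a(1,2) by blast
  with move_Inner_origin[OF b(2)] b(1) obtain jb where jb: "p b = Inner q jb"
    using free_path_no_mover by blast
  show "j' < jb' \<or> j' = jb' \<and> a \<le> b"
  proof (cases "b = a")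
    case False
    with top_mover_unique[OF a(1) b(1) a(2) jb a(3)]
    have "\<not> top_mover I p q jb b" by blast
    with other_mover_moves[OF b(1) jb] b(2) have "jb' = jb \<or> jb' = Suc jb"
      using node_below_eq_Inner by fastforce
    with top_mover_le[OF a(3) b(1) jb] a(5) show ?thesis by auto
  qed (use a b in simp)
qed

lemma mover_pot_mono_South:
  assumes aM: "a \<in> M" and South: "p a = South"
  shows "pot_progress mover_pot a"
proof (cases "a = south_mover I p \<and> free_paths I p r \<noteq> {}")
  case True
  define q where "q = Min (free_paths I p r)"
  have q: "q \<in> free_paths I p r"
    unfolding q_def using True Min_free_paths by blast
  have moved: "p' a = Inner q (d q - 1)"
    using move_mover_South[OF aM South, of r] True unfolding q_def south_end_def by simp
  have "top_mover I p' q (d q - 1) a"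
    unfolding top_mover_def movers_kept
  proof (intro ballI allI impI)
    fix b jb' assume b: "b \<in> M" "p' b = Inner q jb'"
    have "\<nexists>jb. p b = Inner q jb"
      using free_path_no_mover[OF q] mover_pathI b(1) by blast
    with move_Inner_origin[OF b(2)] b(1) True have "b = a" by blast
    with b(2) moved show "d q - 1 < jb' \<or> d q - 1 = jb' \<and> a \<le> b" by simp
  qed
  then have "mover_pot I p' a = d q" 
    using mover_pot_Inner[of p' a q "d q - 1" I, OF moved] path_length_pos[OF free_path_lt[OF q]]
    by simp
  with path_length_le_total[OF free_path_lt[OF q]] show ?thesis
    using mover_pot_South[of p a I, OF South] by simp
next
  case False
  have "p' a = South"
    by (subst move_mover_South[OF aM South]) (rule if_not_P[OF False])
  with South show ?thesis by (simp add: mover_pot_South)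
qed

lemma mover_pot_mono_Inner:
  assumes aM: "a \<in> M" and Inner: "p a = Inner q j"
  shows "pot_progress mover_pot a"
proof -
  have qj: "q < l" "j < d q" and dq: "d q \<le> total_length"
    using pos_Inner_bounds Inner aM movers_le_k path_length_le_total by auto
  show ?thesis
  proof (cases "top_mover I p q j a")
    case True
    have pot: "mover_pot I p a = j + 1"
      using mover_pot_Inner[of p a q j I, OF Inner] True by simp
    from top_mover_moves[OF aM Inner True] show ?thesis
    proof (elim disjE conjE)
      assume stay: "p' a = Inner q j"
      then have "top_mover I p' q j a"
        using top_mover_after[OF aM Inner True] by simp
      with stay pot Inner show ?thesis
        using mover_pot_Inner[of p' a q j] by simp
    next
      assume up: "p' a = node_above q j"
      have "j \<noteq> 0"
      proof
        assume "j = 0"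
        with up have "p' a = North" by (simp add: node_above_def)
        with no_mover_reaches_North aM Inner show False by simp
      qed
      with up have up': "p' a = Inner q (j - 1)"
        unfolding node_above_def by simp
      then have "top_mover I p' q (j - 1) a"
        using top_mover_after[OF aM Inner True] by simp
      with up' \<open>j \<noteq> 0\<close> pot show ?thesis
        using mover_pot_Inner[of p' a q "j - 1" I] by simp
    qed
  next
    case False
    have pot: "mover_pot I p a = total_length + 1 + (d q - j)"
      using mover_pot_Inner[of p a q j I, OF Inner] False by simp
    from other_mover_moves[OF aM Inner False] show ?thesis
    proof (elim disjE conjE)
      assume "p' a = Inner q j"
      with pot Inner qj dq show ?thesis
        using mover_pot_Inner[of p' a q j] by auto
    next
      assume down: "p' a = node_below d q j"
      show ?thesis
      proof (cases "Suc j < d q")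
        case True
        with down have "p' a = Inner q (Suc j)"
          unfolding node_below_def by simp
        with True dq pot show ?thesis
          using mover_pot_Inner[of p' a q "Suc j" I] by auto
      next
        case False
        with down have "p' a = South"
          unfolding node_below_def by simp
        with pot qj show ?thesis
          using mover_pot_South[of p' a I] by (simp add: less_diff_conv)
      qed
    qed
  qed
qed

lemma mover_pot_mono:
  assumes "a \<in> M"
  shows "pot_progress mover_pot a"
proof (cases "p a")
  case North
  with assms show ?thesis
    using move_mover_North[of a I p r] by (simp add: mover_pot_North)
next
  case South
  from assms South show ?thesis by (rule mover_pot_mono_South)
next
  case Inner
  from assms Inner show ?thesis by (rule mover_pot_mono_Inner)
qed

end

lemma movers_nonempty: "north_agents p \<noteq> {} \<Longrightarrow> M \<noteq> {}"
proof -
  assume North_occupied: "north_agents p \<noteq> {}"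
  obtain b c where "b \<le> k" "b \<notin> I" "c \<in> I"
    using not_all_informed informed_nonempty by blast
  with informed_le_k North_occupied have "b \<in> M \<or> c \<in> M"
    unfolding movers_def by auto
  then show ?thesis by blast
qed

lemma mover_on_intact_path_moves:
  assumes P: "\<And>i. i \<le> d P \<Longrightarrow> path_edge d P i \<notin> r"
    and b: "b \<in> M" "p b = Inner P j"
  shows "p' b \<noteq> p b"
proof -
  have "j < d P"
    using pos_Inner_bounds[of b P j] b movers_le_k by auto
  then have "path_edge d P j \<notin> r" "path_edge d P (Suc j) \<notin> r"
    using P by auto
  then show ?thesis
    using top_mover_moves[OF b] other_mover_moves[OF b] b(2) node_above_neq node_below_neq
    by (cases "top_mover I p P j b") auto
qed

lemma stalled_mover:
  assumes movers_stay: "\<forall>a\<in>M. p' a = p a" and no_mover_at_North: "\<forall>a\<in>M. p a \<noteq> North"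
    and P: "P < l" "\<And>i. i \<le> d P \<Longrightarrow> path_edge d P i \<notin> r"
    and aM: "a \<in> M"
  shows "\<exists>q j. p a = Inner q j \<and> q \<noteq> P \<and> top_mover I p q j a \<and> path_edge d q j \<in> r"
proof (cases "p a")
  case North
  with no_mover_at_North aM show ?thesis by simp
next
  case South
  let ?s = "south_mover I p"
  have "finite {b \<in> M. p b = South}"
    using movers_le_k by (auto intro: finite_subset[of _ "{..k}"])
  then have "?s \<in> {b \<in> M. p b = South}"
    unfolding south_mover_def using South aM by (intro Min_in) auto
  then have s: "?s \<in> M" "p ?s = South" by auto
  have "\<not> mover_path I p P"
    using mover_on_intact_path_moves[OF P(2)] movers_stay unfolding mover_path_def by metis
  with P have "P \<in> free_paths I p r"
    unfolding free_paths_def by simp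
  then have "p' ?s = south_end (Min (free_paths I p r))"
    using move_mover_South[OF s, of r] by auto
  with s movers_stay show ?thesis
    by (simp add: south_end_def)
next
  case (Inner q j)
  have qj: "q < l" "j < d q"
    using pos_Inner_bounds[of a q j] Inner aM movers_le_k by auto
  have stays: "p' a = Inner q j"
    using movers_stay aM Inner by simp
  have top: "top_mover I p q j a"
  proof (rule ccontr)
    assume "\<not> top_mover I p q j a"
    then have below_cut: "path_edge d q (Suc j) \<in> r"
      using other_mover_moves[OF aM Inner] stays node_below_neq[of q j] by auto
    obtain b jb where b: "b \<in> M" "p b = Inner q jb" "top_mover I p q jb b"
      using top_mover_exists[OF aM Inner] by blast
    have "jb < d q"
      using pos_Inner_bounds[of b q jb] b movers_le_k by auto
    moreover have "path_edge d q jb \<in> r"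
      using top_mover_moves[OF b] movers_stay b node_above_neq[of q jb] by auto
    ultimately have "jb = Suc j"
      using removed_edge_unique[OF qj(1) _ _ _ below_cut] qj by simp
    with top_mover_le[OF b(3) aM Inner] show False by simp
  qed
  then have "path_edge d q j \<in> r"
    using top_mover_moves[OF aM Inner] stays node_above_neq[of q j] by auto
  with P(2) qj have "q \<noteq> P" by auto
  with Inner top \<open>path_edge d q j \<in> r\<close> show ?thesis by blast
qed

lemma card_stalled_movers:
  assumes movers_stay: "\<forall>a\<in>M. p' a = p a" and no_mover_at_North: "\<forall>a\<in>M. p a \<noteq> North"
    and P: "P < l" "\<And>i. i \<le> d P \<Longrightarrow> path_edge d P i \<notin> r"
  shows "card M < l"
proof (rule card_less_one_per_path[of M p l P])
  fix a assume "a \<in> M"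
  then show "\<exists>q j. p a = Inner q j \<and> q < l \<and> q \<noteq> P"
    using stalled_mover[OF assms] pos_Inner_bounds movers_le_k by blast
next
  fix a b q ja jb assume "a \<in> M" "b \<in> M" "p a = Inner q ja" "p b = Inner q jb"
  moreover from this have "top_mover I p q ja a" "top_mover I p q jb b"
    using stalled_mover[OF assms] by fastforce+
  ultimately show "a = b"
    using top_mover_unique by blast
qed (rule P(1))

lemma helper_pot_North: "p0 a = North \<Longrightarrow> helper_pot I0 p0 a = 2 * total_length + 2"
  unfolding helper_pot_def by simp

lemma helper_pot_South: "p0 a = South \<Longrightarrow> helper_pot I0 p0 a = total_length + 1"
  unfolding helper_pot_def by simp

lemma helper_pot_Inner: "p0 a = Inner q j \<Longrightarrow>
    helper_pot I0 p0 a =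
      (if mover_path I0 p0 q then
         (if \<exists>b\<in>movers I0 p0. \<exists>j'. p0 b = Inner q j' \<and> j' < j then j + 1
          else 2 * total_length + 3 + j)
       else if lowest_helper I0 p0 q j a then total_length + 1 + (d q - j)
       else 2 * total_length + 3 + j)"
  unfolding helper_pot_def by simp

lemma helper_mover_apart:
  "north_agents p \<noteq> {} \<Longrightarrow> a \<le> k \<Longrightarrow> a \<notin> M \<Longrightarrow> b \<in> M \<Longrightarrow> p a \<noteq> p b"
  using same_node_same_status[of a b] mover_status[of b a] movers_le_k by auto

context
  assumes North_occupied: "north_agents p \<noteq> {}" and movers_kept: "movers I p' = M"
    and no_new_meeting: "\<forall>a\<le>k. \<forall>b\<le>k. p' a = p' b \<longrightarrow> (a \<in> I \<longleftrightarrow> b \<in> I)"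
    and movers_stay: "\<forall>a\<in>M. p' a = p a"
begin

lemma helper_mover_apart_after: "a \<le> k \<Longrightarrow> a \<notin> M \<Longrightarrow> b \<in> M \<Longrightarrow> p' a \<noteq> p' b"
  using no_new_meeting mover_status[OF North_occupied, of b a] movers_le_k by blast

lemma mover_path_unchanged: "mover_path I p' q = mover_path I p q"
  unfolding mover_path_def movers_kept using movers_stay by simp

lemma mover_above_unchanged:
  "(\<exists>b\<in>movers I p'. \<exists>j'. p' b = Inner q j' \<and> j' < x) = (\<exists>b\<in>M. \<exists>j'. p b = Inner q j' \<and> j' < x)"
  unfolding movers_kept using movers_stay by simp

lemma mover_above_after:
  assumes "a \<le> k" "a \<notin> M" "b \<in> M" "p b = Inner q jb" "p' a = Inner q j" "jb \<le> j"
  shows "\<exists>b\<in>movers I p'. \<exists>j'. p' b = Inner q j' \<and> j' < j"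
proof -
  have "p' b \<noteq> p' a"
    using helper_mover_apart_after[OF assms(1-3)] by simp
  with assms movers_stay have "jb < j" by auto
  with assms(3,4) show ?thesis
    unfolding mover_above_unchanged by blast
qed

lemma lowest_helper_after:
  assumes a: "a \<le> k" "a \<notin> M" "p a = Inner q j" "lowest_helper I p q j a" "\<not> mover_path I p q"
    "p' a = Inner q j'" "j \<le> j'"
  shows "lowest_helper I p' q j' a"
  unfolding lowest_helper_def movers_kept
proof (intro allI impI)
  fix b jb' assume b: "b \<le> k" "b \<notin> M" "p' b = Inner q jb'"
  have "q \<notin> open_mover_paths I p r" "q \<notin> empty_paths I p r"
    using open_mover_pathD a(5) empty_path_no_agent a(1,3) by blast+
  with move_Inner_origin[OF b(3)] b(2) obtain jb where jb: "p b = Inner q jb"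
    by blast
  show "jb' < j' \<or> jb' = j' \<and> a \<le> b"
  proof (cases "b = a")
    case False
    with lowest_helper_unique[OF a(1,2) b(1,2) a(3) jb a(4)]
    have "\<not> lowest_helper I p q jb b" by blast
    with helper_up_moves[OF b(2) jb] b(3) have "jb' \<le> jb"
      using node_above_eq_Inner by fastforce
    with lowest_helper_ge[OF a(4) b(1,2) jb] a(7) show ?thesis by auto
  qed (use a b in simp)
qed

lemma helper_pot_mono_North:
  assumes aH: "a \<notin> M" and North: "p a = North"
  shows "pot_progress helper_pot a"
proof (cases "a \<noteq> anchor p \<and> a = north_helper I p \<and> empty_paths I p r \<noteq> {}")
  case True
  define q where "q = Min (empty_paths I p r)"
  have q: "q \<in> empty_paths I p r"
    unfolding q_def using True Min_empty_paths by blast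
  have moved: "p' a = Inner q 0"
    unfolding q_def by (subst move_helper_North[OF aH North]) (rule if_P[OF True])
  have no_mover: "\<not> mover_path I p q"
    using empty_path_no_agent[OF q] movers_le_k unfolding mover_path_def by blast
  have "lowest_helper I p' q 0 a"
    unfolding lowest_helper_def movers_kept
  proof (intro allI impI)
    fix b jb' assume b: "b \<le> k" "b \<notin> M" "p' b = Inner q jb'"
    have "\<nexists>jb. p b = Inner q jb" "q \<notin> open_mover_paths I p r"
      using empty_path_no_agent[OF q b(1)] open_mover_pathD no_mover by blast+
    with move_Inner_origin[OF b(3)] b(2) True have "b = a" by blast
    with b(3) moved show "jb' < 0 \<or> jb' = 0 \<and> a \<le> b" by simp
  qed
  then have "helper_pot I p' a = total_length + 1 + d q"
    using helper_pot_Inner[of p' a q 0 I, OF moved] no_mover mover_path_unchanged by simp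
  with path_length_le_total[OF empty_path_lt[OF q]] North show ?thesis
    by (simp add: helper_pot_North)
next
  case False
  have "p' a = North"
    by (subst move_helper_North[OF aH North]) (rule if_not_P[OF False])
  with North show ?thesis by (simp add: helper_pot_North)
qed

lemma helper_pot_mono_South:
  assumes ak: "a \<le> k" and aH: "a \<notin> M" and South: "p a = South"
  shows "pot_progress helper_pot a"
proof (cases "open_mover_paths I p r \<noteq> {}")
  case True
  define q where "q = Min (open_mover_paths I p r)"
  have q: "q \<in> open_mover_paths I p r"
    unfolding q_def using True Min_open_mover_paths by blast
  then have "q < l" and mp: "mover_path I p q"
    using open_mover_pathD by auto
  have moved: "p' a = Inner q (d q - 1)"
    unfolding q_def south_end_def[symmetric]
    by (subst move_helper_South[OF aH South]) (rule if_P[OF True])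
  obtain b jb where b: "b \<in> M" "p b = Inner q jb"
    using mp unfolding mover_path_def by blast
  have "jb < d q"
    using pos_Inner_bounds[of b q jb] b movers_le_k by auto
  then have "jb \<le> d q - 1" by simp
  with mover_above_after[OF ak aH b moved] have "helper_pot I p' a = d q"
    using helper_pot_Inner[of p' a q "d q - 1" I, OF moved] mp mover_path_unchanged
      path_length_pos[OF \<open>q < l\<close>] by simp
  with path_length_le_total[OF \<open>q < l\<close>] South show ?thesis
    by (simp add: helper_pot_South)
next
  case False
  have "p' a = South"
    by (subst move_helper_South[OF aH South]) (rule if_not_P[OF False])
  with South show ?thesis by (simp add: helper_pot_South)
qed

lemma helper_pot_mono_mover_path:
  assumes ak: "a \<le> k" and aH: "a \<notin> M" and Inner: "p a = Inner q j" and mp: "mover_path I p q"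
  shows "pot_progress helper_pot a"
proof -
  have mp': "mover_path I p' q"
    using mp mover_path_unchanged by simp
  from helper_up_moves[OF aH Inner disjI1[OF mp]] show ?thesis
  proof (elim disjE conjE)
    assume "p' a = Inner q j"
    with Inner mp mp' show ?thesis
      using helper_pot_Inner[of p' a q j I] helper_pot_Inner[of p a q j I] mover_above_unchanged
      by simp
  next
    assume up: "p' a = node_above q j"
    show ?thesis
    proof (cases "j = 0")
      case True
      with up Inner mp show ?thesis
        using helper_pot_Inner[of p a q j I] by (simp add: node_above_def helper_pot_North)
    next
      case False
      with up have up': "p' a = Inner q (j - 1)"
        unfolding node_above_def by simp
      show ?thesis
      proof (cases "\<exists>b\<in>M. \<exists>j'. p b = Inner q j' \<and> j' < j")
        case True
        then obtain b jb where b: "b \<in> M" "p b = Inner q jb" "jb < j" by blast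
        with mover_above_after[OF ak aH b(1,2) up'] have "helper_pot I p' a = j"
          using helper_pot_Inner[of p' a q "j - 1" I, OF up'] mp' False by simp
        with Inner mp True show ?thesis
          using helper_pot_Inner[of p a q j I] by simp
      next
        case False
        with Inner mp up' mp' \<open>j \<noteq> 0\<close> show ?thesis
          using helper_pot_Inner[of p a q j I] helper_pot_Inner[of p' a q "j - 1" I] by simp
      qed
    qed
  qed
qed

lemma helper_pot_mono_lowest:
  assumes ak: "a \<le> k" and aH: "a \<notin> M" and Inner: "p a = Inner q j"
    and nmp: "\<not> mover_path I p q" and lowest: "lowest_helper I p q j a"
  shows "pot_progress helper_pot a"
proof -
  have "j < d q"
    using pos_Inner_bounds[of a q j] Inner ak by auto
  have nmp': "\<not> mover_path I p' q"
    using nmp mover_path_unchanged by simp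
  have pot: "helper_pot I p a = total_length + 1 + (d q - j)"
    using helper_pot_Inner[of p a q j I, OF Inner] nmp lowest by simp
  from lowest_helper_moves[OF aH Inner nmp lowest] show ?thesis
  proof (elim disjE conjE)
    assume stay: "p' a = Inner q j"
    then have "lowest_helper I p' q j a"
      using lowest_helper_after[OF ak aH Inner lowest nmp] by simp
    with stay nmp' pot Inner show ?thesis
      using helper_pot_Inner[of p' a q j I] by simp
  next
    assume down: "p' a = node_below d q j"
    show ?thesis
    proof (cases "Suc j < d q")
      case True
      with down have down': "p' a = Inner q (Suc j)"
        unfolding node_below_def by simp
      then have "lowest_helper I p' q (Suc j) a"
        using lowest_helper_after[OF ak aH Inner lowest nmp] by simp
      with down' nmp' pot True show ?thesis
        using helper_pot_Inner[of p' a q "Suc j" I] by (simp add: diff_less_mono2)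
    next
      case False
      with down have "p' a = South"
        unfolding node_below_def by simp
      with pot \<open>j < d q\<close> show ?thesis
        by (simp add: helper_pot_South less_diff_conv)
    qed
  qed
qed

lemma helper_pot_mono_climbing:
  assumes ak: "a \<le> k" and aH: "a \<notin> M" and Inner: "p a = Inner q j"
    and nmp: "\<not> mover_path I p q" and not_lowest: "\<not> lowest_helper I p q j a"
  shows "pot_progress helper_pot a"
proof -
  have "d q \<le> total_length"
    using pos_Inner_bounds[of a q j] Inner ak path_length_le_total by auto
  have nmp': "\<not> mover_path I p' q"
    using nmp mover_path_unchanged by simp
  have pot: "helper_pot I p a = 2 * total_length + 3 + j"
    using helper_pot_Inner[of p a q j I, OF Inner] nmp not_lowest by simp
  from helper_up_moves[OF aH Inner disjI2[OF not_lowest]] show ?thesis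
  proof (elim disjE conjE)
    assume "p' a = Inner q j"
    with nmp' pot Inner \<open>d q \<le> total_length\<close> show ?thesis
      using helper_pot_Inner[of p' a q j I] by auto
  next
    assume up: "p' a = node_above q j"
    show ?thesis
    proof (cases "j = 0")
      case True
      with up pot show ?thesis
        by (simp add: node_above_def helper_pot_North)
    next
      case False
      with up have "p' a = Inner q (j - 1)"
        unfolding node_above_def by simp
      with nmp' pot False \<open>d q \<le> total_length\<close> show ?thesis
        using helper_pot_Inner[of p' a q "j - 1" I] by auto
    qed
  qed
qed

lemma helper_pot_mono:
  assumes "a \<le> k" "a \<notin> M"
  shows "pot_progress helper_pot a"
proof (cases "p a")
  case North
  from assms(2) North show ?thesis by (rule helper_pot_mono_North)
next
  case South
  from assms South show ?thesis by (rule helper_pot_mono_South)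
next
  case (Inner q j)
  consider "mover_path I p q" | "\<not> mover_path I p q" "lowest_helper I p q j a"
    | "\<not> mover_path I p q" "\<not> lowest_helper I p q j a" by blast
  then show ?thesis
    using helper_pot_mono_mover_path helper_pot_mono_lowest helper_pot_mono_climbing
      assms Inner by cases blast+
qed

end

context
  fixes P
  assumes P: "P < l" "\<And>i. i \<le> d P \<Longrightarrow> path_edge d P i \<notin> r"
    and North_occupied: "north_agents p \<noteq> {}" and movers_kept: "movers I p' = M"
    and no_new_meeting: "\<forall>a\<le>k. \<forall>b\<le>k. p' a = p' b \<longrightarrow> (a \<in> I \<longleftrightarrow> b \<in> I)"
    and movers_stay: "\<forall>a\<in>M. p' a = p a"
    and helpers_stay: "\<forall>a\<le>k. a \<notin> M \<longrightarrow> p' a = p a"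
begin

lemma no_mover_at_North: "\<forall>a\<in>M. p a \<noteq> North"
  using helper_mover_apart[OF North_occupied _ anchor_not_mover[OF North_occupied]]
    anchor_at_North[OF North_occupied] by metis

lemma stalled_top_mover:
  "a \<in> M \<Longrightarrow> \<exists>q j. p a = Inner q j \<and> q \<noteq> P \<and> top_mover I p q j a \<and> path_edge d q j \<in> r"
  using stalled_mover[OF movers_stay no_mover_at_North P] .

lemma intact_path_unoccupied: "b \<le> k \<Longrightarrow> p b \<noteq> Inner P j"
proof
  assume b: "b \<le> k" "p b = Inner P j"
  have "j < d P"
    using pos_Inner_bounds[OF b] by simp
  then have "path_edge d P j \<notin> r" "path_edge d P (Suc j) \<notin> r"
    using P(2) by auto
  show False
  proof (cases "b \<in> M")
    case True
    with stalled_top_mover[OF True] b(2) show False by auto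
  next
    case False
    with helpers_stay b have "p' b = p b" by simp
    with helper_up_moves[OF False b(2)] lowest_helper_moves[OF False b(2)]
      \<open>path_edge d P j \<notin> r\<close> \<open>path_edge d P (Suc j) \<notin> r\<close> b(2)
      node_above_neq[of P j] node_below_neq[of P j]
    show False by (cases "mover_path I p P \<or> \<not> lowest_helper I p P j b") auto
  qed
qed

lemma stalled_helper_North:
  assumes "a \<le> k" "a \<notin> M" "a \<noteq> anchor p" "p a = North"
  shows False
proof -
  let ?S = "{b. b \<le> k \<and> b \<notin> M \<and> p b = North \<and> b \<noteq> anchor p}"
  have "north_helper I p \<in> ?S"
    unfolding north_helper_def using assms by (intro Min_in) auto
  moreover have "P \<in> empty_paths I p r"
    unfolding empty_paths_def using P intact_path_unoccupied by simp
  ultimately have "p' (north_helper I p) = Inner (Min (empty_paths I p r)) 0"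
    using move_helper_North[of "north_helper I p" I p r] by auto
  with \<open>north_helper I p \<in> ?S\<close> helpers_stay show False by auto
qed

lemma stalled_helper_South:
  assumes "a \<le> k" "a \<notin> M" "p a = South"
  shows False
proof -
  obtain b where "b \<in> M"
    using movers_nonempty[OF North_occupied] by blast
  then obtain q jb where b: "p b = Inner q jb" "path_edge d q jb \<in> r"
    using stalled_top_mover by blast
  have qj: "q < l" "jb < d q"
    using pos_Inner_bounds[of b q jb] b \<open>b \<in> M\<close> movers_le_k by auto
  have "path_edge d q (d q) \<notin> r"
    using removed_edge_unique[OF qj(1) _ _ b(2)] qj by fastforce
  with qj mover_pathI[OF \<open>b \<in> M\<close> b(1)] have "open_mover_paths I p r \<noteq> {}"
    unfolding open_mover_paths_def by blast
  then have "p' a = south_end (Min (open_mover_paths I p r))"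
    using move_helper_South[OF assms(2,3)] by simp
  with assms helpers_stay show False
    by (simp add: south_end_def)
qed

lemma stalled_helper_on_mover_path:
  assumes ak: "a \<le> k" and aH: "a \<notin> M" and Inner: "p a = Inner q j" and mp: "mover_path I p q"
  shows False
proof -
  have qj: "q < l" "j < d q"
    using pos_Inner_bounds[OF ak Inner] by auto
  have "p' a = p a"
    using helpers_stay ak aH by simp
  with helper_up_moves[OF aH Inner disjI1[OF mp]] Inner node_above_neq[of q j]
  have above_cut: "path_edge d q j \<in> r" by auto
  obtain b0 j0 where "b0 \<in> M" "p b0 = Inner q j0"
    using mp unfolding mover_path_def by blast
  then obtain b jb where b: "b \<in> M" "p b = Inner q jb" "top_mover I p q jb b"
    using top_mover_exists by blast
  then have "path_edge d q jb \<in> r" "jb < d q"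
    using stalled_top_mover[OF b(1)] pos_Inner_bounds[of b q jb] movers_le_k by auto
  then have "j = jb"
    using removed_edge_unique[OF qj(1) _ _ above_cut] qj by simp
  with Inner b(2) have "p a = p b" by simp
  with helper_mover_apart[OF North_occupied ak aH b(1)] show False by simp
qed

lemma stalled_helper_climbing:
  assumes ak: "a \<le> k" and aH: "a \<notin> M" and Inner: "p a = Inner q j"
    and nmp: "\<not> mover_path I p q" and not_lowest: "\<not> lowest_helper I p q j a"
  shows False
proof -
  have qj: "q < l" "j < d q"
    using pos_Inner_bounds[OF ak Inner] by auto
  have "p' a = p a"
    using helpers_stay ak aH by simp
  with helper_up_moves[OF aH Inner disjI2[OF not_lowest]] Inner node_above_neq[of q j]
  have above_cut: "path_edge d q j \<in> r" by auto
  obtain c jc where c: "c \<le> k" "c \<notin> M" "p c = Inner q jc" "lowest_helper I p q jc c"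
    using lowest_helper_exists[OF ak aH Inner] by blast
  have "jc < d q"
    using pos_Inner_bounds[OF c(1,3)] by simp
  moreover have "p' c = p c"
    using helpers_stay c by simp
  with lowest_helper_moves[OF c(2,3) nmp c(4)] c(3) node_below_neq[of q jc]
  have "path_edge d q (Suc jc) \<in> r" by auto
  ultimately have "j = Suc jc"
    using removed_edge_unique[OF qj(1) _ _ above_cut] qj by simp
  with lowest_helper_ge[OF c(4) ak aH Inner] show False by simp
qed

lemma stalled_lowest_helper:
  assumes ak: "a \<le> k" and aH: "a \<notin> M" and "a \<noteq> anchor p"
  shows "\<exists>q j. p a = Inner q j \<and> q \<noteq> P \<and> \<not> mover_path I p q \<and> lowest_helper I p q j a"
proof (cases "p a")
  case North
  with assms stalled_helper_North show ?thesis by blast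
next
  case South
  with assms stalled_helper_South show ?thesis by blast
next
  case (Inner q j)
  with intact_path_unoccupied ak have "q \<noteq> P" by blast
  with Inner ak aH stalled_helper_on_mover_path stalled_helper_climbing show ?thesis by blast
qed

lemma stalled_round_impossible: False
proof -
  let ?A = "{..k} - {anchor p}"
  have "card ?A < l"
  proof (rule card_less_one_per_path[of ?A p l P])
    fix a assume "a \<in> ?A"
    then show "\<exists>q j. p a = Inner q j \<and> q < l \<and> q \<noteq> P"
      using stalled_top_mover stalled_lowest_helper pos_Inner_bounds by (cases "a \<in> M") blast+
  next
    fix a b q ja jb assume ab: "a \<in> ?A" "b \<in> ?A" and pos: "p a = Inner q ja" "p b = Inner q jb"
    have role: "c \<in> M \<and> top_mover I p q jc c
        \<or> c \<notin> M \<and> \<not> mover_path I p q \<and> lowest_helper I p q jc c"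
      if "c \<in> ?A" "p c = Inner q jc" for c jc
      using that stalled_top_mover[of c] stalled_lowest_helper[of c] by (cases "c \<in> M") auto
    from role[OF ab(1) pos(1)] role[OF ab(2) pos(2)] ab pos show "a = b"
      using top_mover_unique[of a b q ja jb] lowest_helper_unique[of a b q ja jb] mover_pathI
      by auto
  qed (rule P(1))
  moreover have "card ?A = k"
    using anchor_at_North[OF North_occupied] by simp
  ultimately show False
    using enough_agents by simp
qed

end

lemma sum_pot_mono:
  assumes "finite A" "\<And>a. a \<in> A \<Longrightarrow> pot_progress pot a"
  shows "(\<Sum>a\<in>A. pot I p' a) \<le> (\<Sum>a\<in>A. pot I p a)"
  using assms by (intro sum_mono) blast

lemma sum_pot_strict_mono:
  assumes "finite A" "\<And>a. a \<in> A \<Longrightarrow> pot_progress pot a" "\<exists>a\<in>A. p' a \<noteq> p a"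
  shows "(\<Sum>a\<in>A. pot I p' a) < (\<Sum>a\<in>A. pot I p a)"
  using assms by (intro sum_strict_mono_ex1) blast+

abbreviation "I' \<equiv> I \<union> {a. a \<le> k \<and> (\<exists>b\<in>I. b \<le> k \<and> p' a = p' b)}"

lemma play_round_eq: "play_round (p, I) r = (p', I')"
  unfolding positional_round_def Let_def by simp

lemma progress_decreases_informed:
  assumes "I' \<noteq> I"
  shows "(progress (p', I'), progress (p, I)) \<in> progress_order"
proof -
  have "{..k} - I' \<subset> {..k} - I"
    using assms informed_le_k by auto
  then have "card ({..k} - I') < card ({..k} - I)"
    by (rule psubset_card_mono[rotated]) simp
  then show ?thesis
    unfolding progress_def by simp
qed

lemma no_new_meeting:
  assumes "I' = I"
  shows "\<forall>a\<le>k. \<forall>b\<le>k. p' a = p' b \<longrightarrow> (a \<in> I \<longleftrightarrow> b \<in> I)"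
proof -
  have "valid_state (p', I')"
    using valid_state_play_round[OF valid, of r] unfolding play_round_eq .
  then show ?thesis
    unfolding valid_state_def fst_conv snd_conv assms by blast
qed

lemma progress_decreases_North_empty:
  assumes "I' = I" and North_empty: "north_agents p = {}"
  shows "(progress (p', I), progress (p, I)) \<in> progress_order"
proof (cases "north_agents p' = {}")
  case True
  have all_movers: "M = {..k}"
    unfolding movers_def using North_empty by simp
  have movers_kept: "movers I p' = M"
    unfolding movers_def using North_empty True by simp
  have no_mover_reaches_North: "\<forall>a\<in>M. p a \<noteq> North \<longrightarrow> p' a \<noteq> North"
    using True all_movers unfolding north_agents_def by auto
  note pot = mover_pot_mono[OF movers_kept no_mover_reaches_North]
  show ?thesis
  proof (cases "\<exists>a\<in>M. p' a \<noteq> p a")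
    case True
    with pot have "(\<Sum>a\<in>M. mover_pot I p' a) < (\<Sum>a\<in>M. mover_pot I p a)"
      by (intro sum_pot_strict_mono) (auto intro: finite_subset[OF movers_le_k])
    with North_empty \<open>north_agents p' = {}\<close> movers_kept show ?thesis
      unfolding progress_def by simp
  next
    case False
    obtain P where P: "P < l" "\<And>i. i \<le> d P \<Longrightarrow> path_edge d P i \<notin> r"
      using intact_path by blast
    from False have "card M < l"
      using North_empty all_movers P by (intro card_stalled_movers) (auto simp: north_agents_def)
    with all_movers enough_agents show ?thesis by simp
  qed
next
  case False
  with North_empty show ?thesis
    unfolding progress_def by simp
qed

lemma progress_decreases_North_occupied:
  assumes "I' = I" and North_occupied: "north_agents p \<noteq> {}"
  shows "(progress (p', I), progress (p, I)) \<in> progress_order"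
proof -
  note no_new_meeting = no_new_meeting[OF assms(1)]
  have anchor: "anchor p \<le> k" "p (anchor p) = North" "anchor p \<notin> M"
    using anchor_at_North[OF North_occupied] anchor_not_mover[OF North_occupied] by auto
  then have anchor_stays: "p' (anchor p) = North"
    using move_helper_North[of "anchor p" I p r] by simp
  then have North_occupied': "north_agents p' \<noteq> {}"
    unfolding north_agents_def using anchor by blast
  then have "anchor p' \<le> k" "p' (anchor p') = North"
    using anchor_in_north_agents unfolding north_agents_def by blast+
  with no_new_meeting anchor anchor_stays have "anchor p' \<in> I \<longleftrightarrow> anchor p \<in> I"
    by metis
  then have movers_kept: "movers I p' = M"
    unfolding movers_def using North_occupied North_occupied' by simp
  have no_mover_reaches_North: "\<forall>a\<in>M. p a \<noteq> North \<longrightarrow> p' a \<noteq> North"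
    using no_new_meeting anchor anchor_stays mover_status[OF North_occupied _ anchor(1,3)]
      movers_le_k by (metis atMost_iff subsetD)
  note mover_pot = mover_pot_mono[OF movers_kept no_mover_reaches_North]
  have finite_M: "finite M"
    using movers_le_k by (auto intro: finite_subset)
  have same_flag: "north_agents p' = {} \<longleftrightarrow> north_agents p = {}"
    using North_occupied North_occupied' by simp
  show ?thesis
  proof (cases "\<exists>a\<in>M. p' a \<noteq> p a")
    case True
    with mover_pot finite_M have "(\<Sum>a\<in>M. mover_pot I p' a) < (\<Sum>a\<in>M. mover_pot I p a)"
      by (intro sum_pot_strict_mono) auto
    with same_flag movers_kept show ?thesis
      unfolding progress_def by simp
  next
    case False
    then have movers_stay: "\<forall>a\<in>M. p' a = p a" by auto
    note helper_pot = helper_pot_mono[OF North_occupied movers_kept no_new_meeting movers_stay]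
    have "(\<Sum>a\<in>M. mover_pot I p' a) \<le> (\<Sum>a\<in>M. mover_pot I p a)"
      using mover_pot finite_M by (intro sum_pot_mono) auto
    moreover obtain P where P: "P < l" "\<And>i. i \<le> d P \<Longrightarrow> path_edge d P i \<notin> r"
      using intact_path by blast
    then have "\<exists>a\<in>{..k} - M. p' a \<noteq> p a"
      using stalled_round_impossible[OF P North_occupied movers_kept no_new_meeting movers_stay]
      by auto
    with helper_pot have "(\<Sum>a\<in>{..k} - M. helper_pot I p' a) < (\<Sum>a\<in>{..k} - M. helper_pot I p a)"
      by (intro sum_pot_strict_mono) auto
    ultimately show ?thesis
      using same_flag movers_kept unfolding progress_def by auto
  qed
qed

lemma progress_decreases: "(progress (play_round (p, I) r), progress (p, I)) \<in> progress_order"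
proof (cases "I' = I")
  case True
  then show ?thesis
    unfolding play_round_eq
    using progress_decreases_North_empty progress_decreases_North_occupied
    by (cases "north_agents p = {}") simp_all
next
  case False
  then show ?thesis
    unfolding play_round_eq by (rule progress_decreases_informed)
qed

end

context theta_broadcast
begin

lemma valid_state_initial:
  assumes "inj_on p0 {..k}" "p0 ` {..k} \<subseteq> theta_V l d" "s \<le> k"
  shows "valid_state (p0, {s})"
  using assms unfolding valid_state_def inj_on_def by auto

lemma play_round_legal:
  assumes "valid_state st" "a \<le> k"
  shows "fst (play_round st r) a = fst st a \<or> {fst st a, fst (play_round st r) a} \<in> theta_E l d - r"
  using assms move_legal[of "fst st" a "snd st" r]
  unfolding valid_state_def positional_round_def Let_def by auto

lemma play_round_progress:
  assumes "valid_state st" "admissible r" "\<not> {..k} \<subseteq> snd st"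
  shows "(progress (play_round st r), progress st) \<in> progress_order"
proof -
  obtain p I where st: "st = (p, I)" by fastforce
  with assms have "theta_round l k d p I r"
    by unfold_locales simp_all
  with st show ?thesis
    using theta_round.progress_decreases by blast
qed

lemma broadcast_solvable_theta: "broadcast_solvable (theta_V l d) (theta_E l d) k"
  unfolding broadcast_solvable_def
proof (rule exI[of _ "positional_strategy k move"], intro allI impI, rule conjI)
  fix p0 s and R :: "nat \<Rightarrow> tnode set set"
  assume "inj_on p0 {..k} \<and> p0 ` {..k} \<subseteq> theta_V l d \<and> s \<le> k
    \<and> (\<forall>t. R t \<subseteq> theta_E l d \<and> graph_connected (theta_V l d) (theta_E l d - R t))"
  then have init: "valid_state (p0, {s})" and admissible: "\<And>t. admissible (R t)"
    using valid_state_initial unfolding admissible_def by auto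
  let ?run = "bc_run k (positional_strategy k move) p0 s R"
  have run_Suc: "?run (Suc t) = play_round (?run t) (R t)" for t
    by (rule bc_run_positional_strategy)
  have valid: "valid_state (?run t)" for t
  proof (induction t)
    case (Suc t)
    then show ?case
      unfolding run_Suc by (metis prod.collapse valid_state_play_round)
  qed (simp add: init)
  show "\<forall>t. \<forall>a\<le>k. let p = fst (?run t); p' = fst (?run (Suc t))
    in p' a = p a \<or> {p a, p' a} \<in> theta_E l d - R t"
    unfolding run_Suc Let_def using play_round_legal valid by blast
  show "\<exists>t. {..k} \<subseteq> snd (?run t)"
  proof (rule ccontr)
    assume "\<nexists>t. {..k} \<subseteq> snd (?run t)"
    then have "(progress (?run (Suc t)), progress (?run t)) \<in> progress_order" for t
      unfolding run_Suc using play_round_progress valid admissible by blast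
    then have "\<exists>f. \<forall>t. (f (Suc t), f t) \<in> progress_order"
      by (intro exI[of _ "\<lambda>t. progress (?run t)"]) simp
    moreover have "wf progress_order"
      by (intro wf_lex_prod wf_less_than)
    ultimately show False
      unfolding wf_iff_no_infinite_down_chain by blast
  qed
qed

end

theorem theorem1:
  fixes l k :: nat and d :: "nat \<Rightarrow> nat"
  assumes "l \<ge> 1"
    and "\<forall>i<l. d i \<ge> 1"
    and "k \<ge> l"
    and "k + 1 \<le> card (theta_V l d)"
  shows "broadcast_solvable (theta_V l d) (theta_E l d) k"
proof -
  interpret theta_broadcast l k d
    using assms by unfold_locales auto
  show ?thesis
    by (rule broadcast_solvable_theta)
qed

end
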